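(* Let $f\colon\mathbb{R}\to\mathbb{R}$ be locally Lipschitz continuous and let $\phi_\pm\in\mathbb{R}$ with $\phi_-<0<\phi_+$. Suppose $f(\phi_+)=f(\phi_-)$ and $f(z)-f(\phi_\pm)<0$ for all $z\in(\phi_-,\phi_+)$. Then for each $\kappa\in(f(0),f(\phi_\pm))$ there exists a constant $R>0$ such that for every $\delta\in(0,\kappa-f(0))$ there exist $\tilde f\in C^\infty(\mathbb{R})$ and $\psi_\pm\in(\phi_-,\phi_+)$ with $\psi_-<0<\psi_+$ such that: (i) $\tilde f(\phi_+)=\tilde f(\phi_-)$, $\tilde f'(\phi_\pm)\neq0$, and $\tilde f(z)-\tilde f(\phi_\pm)<0$ for all $z\in(\phi_-,\phi_+)$; (ii) $\tilde f(\psi_+)=\kappa=\tilde f(\psi_-)$, $\tilde f'(\psi_\pm)\neq0$, and $\tilde f(z)-\tilde f(\psi_\pm)<0$ for all $z\in(\psi_-,\psi_+)$; (iii) $|f(z)-\tilde f(z)|<\delta$ and $|\tilde f'(z)|<R$ for all $z\in[\phi_-,\phi_+]$. *)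

theory Defs
  imports "HOL-Analysis.Analysis"
begin

definition locally_lipschitz :: "(real \<Rightarrow> real) \<Rightarrow> bool" where
  "locally_lipschitz f \<longleftrightarrow>
     (\<forall>x. \<exists>e>0. \<exists>L. \<forall>y\<in>ball x e. \<forall>z\<in>ball x e. \<bar>f y - f z\<bar> \<le> L * \<bar>y - z\<bar>)"

definition smooth :: "(real \<Rightarrow> real) \<Rightarrow> bool" where
  "smooth f \<longleftrightarrow> (\<forall>n. \<forall>x. ((deriv ^^ n) f) differentiable (at x))"

end

theory Submission
  imports Defs "HOL-Computational_Algebra.Polynomial"
begin

(* Rescale f to [0, 1] and replace it by a Bernstein polynomial B_n f. B_n f agrees with f at
   the endpoints, stays strictly below f(phi+-) inside because it is a convex combination of
   samples of f none of which exceeds f(phi+-), and is uniformly close to f for large n. Its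
   derivative is the Bernstein polynomial of the difference quotients n (f((k+1)/n) - f(k/n)),
   hence bounded by the Lipschitz constant; at the endpoints it equals the first and last of
   these quotients, which are nonzero because f dips strictly below f(phi+-). A polynomial has
   only finitely many critical values, so a small upward shift makes kappa a regular value
   while keeping the value at 0 below kappa; psi+- are the crossings of level kappa nearest to
   0 on either side. *)

lemma deriv_poly: "deriv (poly p) = poly (pderiv p)" for p :: "real poly"
  using DERIV_imp_deriv[OF poly_DERIV] by blast

lemma smooth_poly: "smooth (poly p)"
proof -
  have "(deriv ^^ n) (poly p) = poly ((pderiv ^^ n) p)" for n
    by (induction n) (simp_all add: deriv_poly)
  then show ?thesis
    unfolding smooth_def by (metis poly_DERIV real_differentiable_def)
qed

lemma locally_lipschitz_lipschitz_on_compact: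
  assumes "locally_lipschitz f" and "compact S"
  obtains L where "L-lipschitz_on S f"
proof -
  have "local_lipschitz {0::real} S (\<lambda>_. f)"
  proof (rule local_lipschitzI)
    fix x assume "x \<in> S"
    obtain e L where "e > 0"
      and L: "\<forall>y\<in>ball x e. \<forall>z\<in>ball x e. \<bar>f y - f z\<bar> \<le> L * \<bar>y - z\<bar>"
      using assms(1) unfolding locally_lipschitz_def by blast
    have "\<bar>L\<bar>-lipschitz_on (cball x (e/2) \<inter> S) f"
    proof (rule lipschitz_onI)
      fix y z assume "y \<in> cball x (e/2) \<inter> S" "z \<in> cball x (e/2) \<inter> S"
      then have "\<bar>f y - f z\<bar> \<le> L * \<bar>y - z\<bar>"
        using L \<open>e > 0\<close> by (simp add: dist_real_def)
      also have "\<dots> \<le> \<bar>L\<bar> * \<bar>y - z\<bar>" by (simp add: mult_right_mono)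
      finally show "dist (f y) (f z) \<le> \<bar>L\<bar> * dist y z" by (simp add: dist_real_def)
    qed simp
    then show "\<exists>u>0. \<exists>L. \<forall>t\<in>cball t u \<inter> {0}. L-lipschitz_on (cball x u \<inter> S) f"
      for t using \<open>e > 0\<close> by (intro exI[of _ "e/2"]) auto
  qed
  from local_lipschitz_compact_implies_lipschitz[OF this assms(2) compact_sing] that
  show thesis by auto
qed

lemma has_real_derivative_Bernstein_Suc_0:
  "(Bernstein (Suc n) 0 has_real_derivative - real (Suc n) * Bernstein n 0 x) (at x)"
proof -
  have "((\<lambda>x. (1 - x) ^ Suc n) has_real_derivative real (Suc n) * (1 - x) ^ n * (0 - 1))
      (at x)"
    by (intro derivative_eq_intros) auto
  then show ?thesis
    unfolding Bernstein_def by (simp add: ring_distribs)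
qed

lemma has_real_derivative_Bernstein_Suc_Suc:
  "(Bernstein (Suc n) (Suc k) has_real_derivative
     real (Suc n) * (Bernstein n k x - Bernstein n (Suc k) x)) (at x)"
proof -
  define C where "C = real (Suc n choose Suc k)"
  have up: "C * real (Suc k) = real (Suc n) * real (n choose k)"
    using binomial_absorption[of k "Suc n"] unfolding C_def
    by (simp only: of_nat_mult[symmetric] mult.commute diff_Suc_1)
  have down: "C * real (n - k) = real (Suc n) * real (n choose Suc k)"
    using binomial_absorb_comp[of "Suc n" "Suc k"] unfolding C_def
    by (simp only: of_nat_mult[symmetric] mult.commute diff_Suc_1 diff_Suc_Suc)
  have "((\<lambda>x. x ^ Suc k * (1 - x) ^ (n - k)) has_real_derivative
      real (Suc k) * x ^ k * (1 - x) ^ (n - k) - real (n - k) * x ^ Suc k * (1 - x) ^ (n - Suc k))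
      (at x)"
    by (rule derivative_eq_intros refl)+ (simp add: mult.commute mult.left_commute)
  then have "((\<lambda>x. C * (x ^ Suc k * (1 - x) ^ (n - k))) has_real_derivative
      (C * real (Suc k)) * (x ^ k * (1 - x) ^ (n - k))
      - (C * real (n - k)) * (x ^ Suc k * (1 - x) ^ (n - Suc k))) (at x)"
    by (rule DERIV_cmult[THEN DERIV_cong]) (simp add: right_diff_distrib mult_ac)
  moreover have "Bernstein (Suc n) (Suc k) = (\<lambda>x. C * (x ^ Suc k * (1 - x) ^ (n - k)))"
    by (simp add: fun_eq_iff Bernstein_def C_def mult.assoc)
  ultimately show ?thesis
    unfolding up down by (simp add: Bernstein_def right_diff_distrib mult_ac)
qed

lemma has_real_derivative_Bernstein_sum:
  "((\<lambda>x. \<Sum>k\<le>Suc n. a k * Bernstein (Suc n) k x) has_real_derivative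
     (\<Sum>k\<le>n. real (Suc n) * (a (Suc k) - a k) * Bernstein n k x)) (at x)"
proof -
  define c where "c = real (Suc n)"
  have shift: "(\<Sum>k\<le>n. a k * Bernstein n k x)
      = a 0 * Bernstein n 0 x + (\<Sum>k\<le>n. a (Suc k) * Bernstein n (Suc k) x)"
    using sum.atMost_Suc_shift[of "\<lambda>k. a k * Bernstein n k x" n]
    by (simp add: Bernstein_def binomial_eq_0)
  have "((\<lambda>x. \<Sum>k\<le>Suc n. a k * Bernstein (Suc n) k x) has_real_derivative
      a 0 * (- c * Bernstein n 0 x)
      + (\<Sum>k\<le>n. a (Suc k) * (c * (Bernstein n k x - Bernstein n (Suc k) x)))) (at x)"
    unfolding sum.atMost_Suc_shift c_def
    by (intro DERIV_add DERIV_sum DERIV_cmult has_real_derivative_Bernstein_Suc_0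
        has_real_derivative_Bernstein_Suc_Suc)
  moreover have "a 0 * (- c * Bernstein n 0 x)
      + (\<Sum>k\<le>n. a (Suc k) * (c * (Bernstein n k x - Bernstein n (Suc k) x)))
      = (\<Sum>k\<le>n. c * (a (Suc k) - a k) * Bernstein n k x)"
    by (simp add: shift algebra_simps sum_subtractf flip: sum_distrib_left)
  ultimately show ?thesis by (simp add: c_def)
qed

lemma sum_Bernstein_at_0: "(\<Sum>k\<le>n. a k * Bernstein n k 0) = a 0"
proof -
  have "(\<Sum>k\<le>n. a k * Bernstein n k 0) = (\<Sum>k\<le>n. if k = 0 then a k else 0)"
    by (intro sum.cong) (auto simp: Bernstein_def)
  then show ?thesis by simp
qed

lemma sum_Bernstein_at_1: "(\<Sum>k\<le>n. a k * Bernstein n k 1) = a n"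
proof -
  have "(\<Sum>k\<le>n. a k * Bernstein n k 1) = (\<Sum>k\<le>n. if k = n then a k else 0)"
    by (intro sum.cong) (auto simp: Bernstein_def)
  then show ?thesis by simp
qed

lemma Bernstein_sum_as_poly:
  obtains p :: "real poly" where
    "\<And>x. poly p x = (\<Sum>k\<le>Suc n. a k * Bernstein (Suc n) k x)"
    "\<And>x. poly (pderiv p) x = (\<Sum>k\<le>n. real (Suc n) * (a (Suc k) - a k) * Bernstein n k x)"
proof
  define p where "p = (\<Sum>k\<le>Suc n.
    smult (a k * of_nat (Suc n choose k)) ([:0, 1:] ^ k * [:1, -1:] ^ (Suc n - k)))"
  have p: "poly p = (\<lambda>x. \<Sum>k\<le>Suc n. a k * Bernstein (Suc n) k x)"
    by (simp add: fun_eq_iff p_def poly_sum Bernstein_def mult.assoc)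
  then show "poly p x = (\<Sum>k\<le>Suc n. a k * Bernstein (Suc n) k x)" for x
    by simp
  show "poly (pderiv p) x = (\<Sum>k\<le>n. real (Suc n) * (a (Suc k) - a k) * Bernstein n k x)" for x
    using has_real_derivative_Bernstein_sum[where n = n and a = a and x = x]
    unfolding p[symmetric] by (rule DERIV_unique[OF poly_DERIV])
qed

lemma abs_Bernstein_sum_le:
  assumes "\<And>k. k \<le> n \<Longrightarrow> \<bar>a k\<bar> \<le> M" and "x \<in> {0..1}"
  shows "\<bar>\<Sum>k\<le>n. a k * Bernstein n k x\<bar> \<le> M"
proof -
  have "\<bar>\<Sum>k\<le>n. a k * Bernstein n k x\<bar> \<le> (\<Sum>k\<le>n. \<bar>a k\<bar> * Bernstein n k x)"
    using sum_abs[of "\<lambda>k. a k * Bernstein n k x"] assms(2)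
    by (simp add: abs_mult Bernstein_nonneg)
  also have "\<dots> \<le> (\<Sum>k\<le>n. M * Bernstein n k x)"
    using assms by (intro sum_mono mult_right_mono) (auto simp: Bernstein_nonneg)
  finally show ?thesis by (simp flip: sum_distrib_left)
qed

lemma Bernstein_sum_less:
  assumes "\<And>k. k \<le> n \<Longrightarrow> a k \<le> c" and "j \<le> n" "a j < c" and "x \<in> {0<..<1}"
  shows "(\<Sum>k\<le>n. a k * Bernstein n k x) < c"
proof -
  have "0 < (\<Sum>k\<le>n. (c - a k) * Bernstein n k x)"
    using assms
    by (intro sum_pos2[of _ j]) (auto intro!: mult_pos_pos mult_nonneg_nonneg Bernstein_pos
        Bernstein_nonneg)
  also have "\<dots> = c - (\<Sum>k\<le>n. a k * Bernstein n k x)"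
    by (simp add: left_diff_distrib sum_subtractf flip: sum_distrib_left)
  finally show ?thesis by simp
qed

lemma lipschitz_on_sample_step:
  assumes lip: "L-lipschitz_on {0..1} F" and "k < n"
  shows "\<bar>real n * (F (real (Suc k) / real n) - F (real k / real n))\<bar> \<le> L"
proof -
  have "dist (F (real (Suc k) / real n)) (F (real k / real n))
      \<le> L * dist (real (Suc k) / real n) (real k / real n)"
    using \<open>k < n\<close> by (intro lipschitz_onD[OF lip]) auto
  also have "\<dots> = L / real n"
    by (simp add: dist_real_def diff_divide_distrib[symmetric])
  finally have "\<bar>F (real (Suc k) / real n) - F (real k / real n)\<bar> \<le> L / real n"
    by (simp add: dist_real_def)
  then show ?thesis
    using \<open>k < n\<close> by (simp add: abs_mult pos_le_divide_eq mult.commute)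
qed

lemma Bernstein_approximation_of_well:
  fixes F :: "real \<Rightarrow> real"
  assumes lip: "L-lipschitz_on {0..1} F" and ends: "F 1 = F 0"
    and below: "\<And>x. x \<in> {0<..<1} \<Longrightarrow> F x < F 0" and "\<epsilon> > 0"
  obtains p :: "real poly" where
    "poly p 0 = F 0" "poly p 1 = F 1" "poly (pderiv p) 0 < 0" "0 < poly (pderiv p) 1"
    "\<And>x. x \<in> {0<..<1} \<Longrightarrow> poly p x < F 0"
    "\<And>x. x \<in> {0..1} \<Longrightarrow> \<bar>F x - poly p x\<bar> < \<epsilon>"
    "\<And>x. x \<in> {0..1} \<Longrightarrow> \<bar>poly (pderiv p) x\<bar> \<le> L"
proof -
  obtain N where N: "\<And>n x. N \<le> n \<Longrightarrow> x \<in> {0..1} \<Longrightarrow>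
      \<bar>F x - (\<Sum>k\<le>n. F (k / n) * Bernstein n k x)\<bar> < \<epsilon>"
    using Bernstein_Weierstrass[OF lipschitz_on_continuous_on[OF lip] \<open>\<epsilon> > 0\<close>] by blast
  define m where "m = max N 1"
  have m: "1 \<le> m" "N \<le> Suc m" by (auto simp: m_def)
  define a where "a k = F (real k / real (Suc m))" for k
  obtain p where p: "\<And>x. poly p x = (\<Sum>k\<le>Suc m. a k * Bernstein (Suc m) k x)"
    and p': "\<And>x. poly (pderiv p) x
      = (\<Sum>k\<le>m. real (Suc m) * (a (Suc k) - a k) * Bernstein m k x)"
    using Bernstein_sum_as_poly by blast
  have a_le: "a k \<le> F 0" if "k \<le> Suc m" for k
  proof (cases "k = 0 \<or> k = Suc m")
    case True
    then show ?thesis using ends by (auto simp: a_def)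
  next
    case False
    then show ?thesis
      using that below[of "real k / real (Suc m)"] by (auto simp: a_def less_eq_real_def)
  qed
  have a_step: "\<bar>real (Suc m) * (a (Suc k) - a k)\<bar> \<le> L" if "k \<le> m" for k
    unfolding a_def using lipschitz_on_sample_step[OF lip, of k "Suc m"] that by simp
  have a_1: "a 1 < F 0" and a_m: "a m < F 1"
    using below[of "1 / real (Suc m)"] below[of "real m / real (Suc m)"] ends m
    by (auto simp: a_def)
  show thesis
  proof
    show "poly p 0 = F 0" "poly p 1 = F 1"
      by (simp_all add: p sum_Bernstein_at_0 sum_Bernstein_at_1 a_def)
    show "poly (pderiv p) 0 < 0" "0 < poly (pderiv p) 1"
      using a_1 a_m ends
      by (simp_all add: p' sum_Bernstein_at_0 sum_Bernstein_at_1 a_def mult_less_0_iff)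
    show "poly p x < F 0" if "x \<in> {0<..<1}" for x
      unfolding p using a_le a_1 m that by (intro Bernstein_sum_less[of _ _ _ 1]) auto
    show "\<bar>F x - poly p x\<bar> < \<epsilon>" if "x \<in> {0..1}" for x
      using N[OF m(2) that] by (simp add: p a_def)
    show "\<bar>poly (pderiv p) x\<bar> \<le> L" if "x \<in> {0..1}" for x
      unfolding p' using a_step that by (rule abs_Bernstein_sum_le)
  qed
qed

lemma polynomial_approximation_of_well:
  fixes f :: "real \<Rightarrow> real"
  assumes lip: "L-lipschitz_on {a..b} f" and "a < b" and ends: "f b = f a"
    and below: "\<And>z. z \<in> {a<..<b} \<Longrightarrow> f z < f a" and "\<epsilon> > 0"
  obtains p :: "real poly" where
    "poly p a = f a" "poly p b = f b" "poly (pderiv p) a < 0" "0 < poly (pderiv p) b"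
    "\<And>z. z \<in> {a<..<b} \<Longrightarrow> poly p z < f a"
    "\<And>z. z \<in> {a..b} \<Longrightarrow> \<bar>f z - poly p z\<bar> < \<epsilon>"
    "\<And>z. z \<in> {a..b} \<Longrightarrow> \<bar>poly (pderiv p) z\<bar> \<le> L"
proof -
  define d where "d = b - a"
  have "d > 0" using \<open>a < b\<close> by (simp add: d_def)
  define F where "F x = f (a + d * x)" for x
  define u where "u z = (z - a) / d" for z
  have F_u: "F (u z) = f z" for z
    using \<open>d > 0\<close> by (simp add: F_def u_def)
  have u_closed: "u z \<in> {0..1} \<longleftrightarrow> z \<in> {a..b}"
    and u_open: "u z \<in> {0<..<1} \<longleftrightarrow> z \<in> {a<..<b}" for z
    using \<open>d > 0\<close> by (auto simp: u_def d_def field_simps)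
  have u_inv: "u (a + d * x) = x" for x
    using \<open>d > 0\<close> by (simp add: u_def)
  have "(L * d)-lipschitz_on {0..1} F"
  proof (rule lipschitz_onI)
    fix x y :: real assume "x \<in> {0..1}" "y \<in> {0..1}"
    then have "a + d * x \<in> {a..b}" "a + d * y \<in> {a..b}"
      using u_closed[of "a + d * x"] u_closed[of "a + d * y"] by (simp_all add: u_inv)
    then have "dist (F x) (F y) \<le> L * dist (a + d * x) (a + d * y)"
      unfolding F_def by (rule lipschitz_onD[OF lip])
    also have "\<dots> = L * d * dist x y"
      using \<open>d > 0\<close> by (simp add: dist_real_def abs_mult flip: right_diff_distrib)
    finally show "dist (F x) (F y) \<le> L * d * dist x y" .
  qed (use lipschitz_on_nonneg[OF lip] \<open>d > 0\<close> in simp)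
  moreover have "F 1 = F 0"
    using ends by (simp add: F_def d_def)
  moreover have "F x < F 0" if "x \<in> {0<..<1}" for x
    using below[of "a + d * x"] u_open[of "a + d * x"] that by (simp add: F_def u_inv)
  ultimately obtain q where q:
    "poly q 0 = F 0" "poly q 1 = F 1" "poly (pderiv q) 0 < 0" "0 < poly (pderiv q) 1"
    "\<And>x. x \<in> {0<..<1} \<Longrightarrow> poly q x < F 0"
    "\<And>x. x \<in> {0..1} \<Longrightarrow> \<bar>F x - poly q x\<bar> < \<epsilon>"
    "\<And>x. x \<in> {0..1} \<Longrightarrow> \<bar>poly (pderiv q) x\<bar> \<le> L * d"
    using Bernstein_approximation_of_well \<open>\<epsilon> > 0\<close> by metis
  define p where "p = pcompose q [:- a / d, 1 / d:]"
  have p: "poly p z = poly q (u z)" and p': "poly (pderiv p) z = poly (pderiv q) (u z) / d"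
    for z by (simp_all add: p_def u_def poly_pcompose pderiv_pcompose pderiv_pCons
      diff_divide_distrib)
  have u_ends: "u a = 0" "u b = 1"
    using \<open>d > 0\<close> by (auto simp: u_def d_def)
  show thesis
  proof
    show "poly p a = f a" "poly p b = f b"
      using q(1,2) by (simp_all add: p u_ends F_def d_def)
    show "poly (pderiv p) a < 0" "0 < poly (pderiv p) b"
      using q(3,4) \<open>d > 0\<close> by (simp_all add: p' u_ends divide_neg_pos)
    show "poly p z < f a" if "z \<in> {a<..<b}" for z
      using q(5)[of "u z"] that u_open by (simp add: p F_def)
    show "\<bar>f z - poly p z\<bar> < \<epsilon>" if "z \<in> {a..b}" for z
      using q(6)[of "u z"] that u_closed by (simp add: p F_u)
    show "\<bar>poly (pderiv p) z\<bar> \<le> L" if "z \<in> {a..b}" for z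
      using q(7)[of "u z"] that u_closed \<open>d > 0\<close> by (simp add: p' pos_divide_le_eq)
  qed
qed

lemma poly_exists_regular_shift:
  fixes p :: "real poly"
  assumes "pderiv p \<noteq> 0" and "s < s'"
  obtains t where "t \<in> {s<..<s'}" "\<And>z. poly p z + t = c \<Longrightarrow> poly (pderiv p) z \<noteq> 0"
proof -
  have "finite ((\<lambda>z. c - poly p z) ` {z. poly (pderiv p) z = 0})"
    using poly_roots_finite[OF assms(1)] by simp
  moreover have "infinite {s<..<s'}"
    using assms(2) by simp
  ultimately obtain t where "t \<in> {s<..<s'}"
    "t \<notin> (\<lambda>z. c - poly p z) ` {z. poly (pderiv p) z = 0}"
    by (meson finite_subset subsetI)
  then show thesis
    using that by force
qed

lemma first_crossing:
  fixes g :: "real \<Rightarrow> real"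
  assumes cont: "continuous_on {c..b} g" and "c < b" and "g c < k" "k < g b"
  obtains r where "r \<in> {c<..<b}" "g r = k" "\<And>z. z \<in> {c..<r} \<Longrightarrow> g z < k"
proof -
  define S where "S = {z \<in> {c..b}. g z = k}"
  obtain x where "c \<le> x" "x \<le> b" "g x = k"
    using IVT'[OF less_imp_le less_imp_le less_imp_le cont] assms(2-4) by blast
  then have "S \<noteq> {}"
    by (auto simp: S_def)
  moreover have "bdd_below S"
    by (rule bdd_belowI[of _ c]) (simp add: S_def)
  moreover have "closed S"
    unfolding S_def by (rule continuous_closed_preimage_constant[OF cont closed_atLeastAtMost])
  ultimately have r: "Inf S \<in> S"
    by (rule closed_contains_Inf)
  have below: "g z < k" if z: "z \<in> {c..<Inf S}" for z
  proof (rule ccontr)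
    assume "\<not> g z < k"
    moreover have "continuous_on {c..z} g"
      using r z by (intro continuous_on_subset[OF cont]) (auto simp: S_def)
    ultimately obtain x where "c \<le> x" "x \<le> z" "g x = k"
      using IVT'[of g c k z] z \<open>g c < k\<close> by auto
    then have "Inf S \<le> x"
      using \<open>bdd_below S\<close> r z by (intro cInf_lower) (auto simp: S_def)
    with \<open>x \<le> z\<close> z show False by simp
  qed
  have "Inf S \<noteq> c" "Inf S \<noteq> b"
    using r assms(3,4) by (auto simp: S_def)
  with r have "Inf S \<in> {c<..<b}" "g (Inf S) = k"
    by (auto simp: S_def)
  with below that show thesis by blast
qed

lemma sublevel_interval_around:
  fixes g :: "real \<Rightarrow> real"
  assumes cont: "continuous_on {a..b} g" and "a < c" "c < b"
    and "g c < k" "k < g a" "k < g b"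
  obtains l r where "a < l" "l < c" "c < r" "r < b" "g l = k" "g r = k"
    "\<And>z. z \<in> {l<..<r} \<Longrightarrow> g z < k"
proof -
  have "continuous_on {c..b} g"
    using cont by (rule continuous_on_subset) (use \<open>a < c\<close> in auto)
  then obtain r where r: "r \<in> {c<..<b}" "g r = k" "\<And>z. z \<in> {c..<r} \<Longrightarrow> g z < k"
    using first_crossing assms by metis
  have "continuous_on {-c..-a} (\<lambda>z. g (- z))"
    using \<open>c < b\<close> by (intro continuous_on_compose2[OF cont] continuous_intros) auto
  then obtain l where l: "l \<in> {-c<..<-a}" "g (- l) = k"
    "\<And>z. z \<in> {-c..<l} \<Longrightarrow> g (- z) < k"
    using first_crossing[of "- c" "- a" "\<lambda>z. g (- z)"] assms by auto
  show thesis
  proof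
    show "g z < k" if "z \<in> {- l<..<r}" for z
      using r(3)[of z] l(3)[of "- z"] that by (cases "c \<le> z") auto
  qed (use r l in auto)
qed

lemma smooth_approximation_of_well:
  fixes f :: "real \<Rightarrow> real"
  assumes L: "L-lipschitz_on {a..b} f" and "a < c" "c < b"
    and ends: "f b = f a" and below: "\<And>z. z \<in> {a<..<b} \<Longrightarrow> f z < f a"
    and "f c < \<kappa>" "\<kappa> < f a" and "0 < \<delta>" "\<delta> < \<kappa> - f c"
  obtains g l r where "smooth g" "a < l" "l < c" "c < r" "r < b"
    "g b = g a" "deriv g a \<noteq> 0" "deriv g b \<noteq> 0" "\<And>z. z \<in> {a<..<b} \<Longrightarrow> g z < g b"
    "g l = \<kappa>" "g r = \<kappa>" "deriv g l \<noteq> 0" "deriv g r \<noteq> 0"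
    "\<And>z. z \<in> {l<..<r} \<Longrightarrow> g z < \<kappa>"
    "\<And>z. z \<in> {a..b} \<Longrightarrow> \<bar>f z - g z\<bar> < \<delta>"
    "\<And>z. z \<in> {a..b} \<Longrightarrow> \<bar>deriv g z\<bar> \<le> L"
proof -
  have "a < b" using \<open>a < c\<close> \<open>c < b\<close> by simp
  obtain p where p: "poly p a = f a" "poly p b = f b"
    "poly (pderiv p) a < 0" "0 < poly (pderiv p) b"
    "\<And>z. z \<in> {a<..<b} \<Longrightarrow> poly p z < f a"
    "\<And>z. z \<in> {a..b} \<Longrightarrow> \<bar>f z - poly p z\<bar> < \<delta> / 2"
    "\<And>z. z \<in> {a..b} \<Longrightarrow> \<bar>poly (pderiv p) z\<bar> \<le> L"
    using polynomial_approximation_of_well[OF L \<open>a < b\<close> ends below, of "\<delta> / 2"] \<open>0 < \<delta>\<close>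
    by auto
  have "pderiv p \<noteq> 0" "0 < \<delta> / 2"
    using p(3) \<open>0 < \<delta>\<close> by auto
  then obtain t where t: "t \<in> {0<..<\<delta> / 2}"
    "\<And>z. poly p z + t = \<kappa> \<Longrightarrow> poly (pderiv p) z \<noteq> 0"
    using poly_exists_regular_shift[where c = \<kappa>] by blast
  define g where "g = poly (p + [:t:])"
  have g: "g z = poly p z + t" "deriv g z = poly (pderiv p) z" for z
    by (simp_all add: g_def deriv_poly pderiv_add pderiv_pCons)
  have "continuous_on {a..b} g"
    unfolding g_def by (intro continuous_on_poly continuous_on_id)
  moreover have "\<bar>f c - poly p c\<bar> < \<delta> / 2"
    using p(6) assms(2,3) by simp
  then have "g c < \<kappa>"
    unfolding g abs_less_iff using t(1) assms(9) by simp
  moreover have "\<kappa> < g a" "\<kappa> < g b"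
    using p(1,2) t(1) ends assms(7) by (auto simp: g)
  ultimately obtain l r where lr: "a < l" "l < c" "c < r" "r < b"
    "g l = \<kappa>" "g r = \<kappa>" "\<And>z. z \<in> {l<..<r} \<Longrightarrow> g z < \<kappa>"
    using sublevel_interval_around assms(2,3) by blast
  show thesis
  proof (rule that[OF _ lr(1-4) _ _ _ _ lr(5,6) _ _ lr(7)])
    show "smooth g"
      unfolding g_def by (rule smooth_poly)
    show "g b = g a" "\<And>z. z \<in> {a<..<b} \<Longrightarrow> g z < g b"
      using p(1,2,5) ends by (simp_all add: g(1))
    show "deriv g a \<noteq> 0" "deriv g b \<noteq> 0"
      "\<And>z. z \<in> {a..b} \<Longrightarrow> \<bar>deriv g z\<bar> \<le> L"
      unfolding g(2) using p(3,4,7) by auto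
    show "deriv g l \<noteq> 0" "deriv g r \<noteq> 0"
      unfolding g(2) using t(2) lr(5,6) by (simp_all add: g(1))
    show "\<bar>f z - g z\<bar> < \<delta>" if "z \<in> {a..b}" for z
      using p(6)[OF that] t(1) unfolding g abs_less_iff by simp
  qed
qed

theorem lemma3p2:
  fixes f :: "real \<Rightarrow> real" and phim phip :: real
  assumes "locally_lipschitz f"
    and "phim < 0" and "0 < phip"
    and "f phip = f phim"
    and "\<forall>z\<in>{phim<..<phip}. f z - f phip < 0"
  shows "\<forall>\<kappa>\<in>{f 0<..<f phip}. \<exists>R>0. \<forall>\<delta>\<in>{0<..<\<kappa> - f 0}.
     \<exists>g psim psip. smooth g \<and> psim \<in> {phim<..<phip} \<and> psip \<in> {phim<..<phip}
       \<and> psim < 0 \<and> 0 < psip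
       \<and> g phip = g phim \<and> deriv g phip \<noteq> 0 \<and> deriv g phim \<noteq> 0
       \<and> (\<forall>z\<in>{phim<..<phip}. g z - g phip < 0)
       \<and> g psip = \<kappa> \<and> g psim = \<kappa> \<and> deriv g psip \<noteq> 0 \<and> deriv g psim \<noteq> 0
       \<and> (\<forall>z\<in>{psim<..<psip}. g z - g psip < 0)
       \<and> (\<forall>z\<in>{phim..phip}. \<bar>f z - g z\<bar> < \<delta> \<and> \<bar>deriv g z\<bar> < R)"
proof -
  obtain L where L: "L-lipschitz_on {phim..phip} f"
    using locally_lipschitz_lipschitz_on_compact[OF assms(1) compact_Icc] .
  have below: "\<And>z. z \<in> {phim<..<phip} \<Longrightarrow> f z < f phim"
    using assms(4,5) by auto
  show ?thesis
  proof (intro ballI exI[of _ "L + 1"] conjI)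
    show "0 < L + 1"
      using lipschitz_on_nonneg[OF L] by simp
    fix \<kappa> \<delta> assume "\<kappa> \<in> {f 0<..<f phip}" "\<delta> \<in> {0<..<\<kappa> - f 0}"
    then have levels: "f 0 < \<kappa>" "\<kappa> < f phim" "0 < \<delta>" "\<delta> < \<kappa> - f 0"
      using assms(4) by auto
    obtain g psim psip where g:
      "smooth g" "phim < psim" "psim < 0" "0 < psip" "psip < phip"
      "g phip = g phim" "deriv g phim \<noteq> 0" "deriv g phip \<noteq> 0"
      "\<And>z. z \<in> {phim<..<phip} \<Longrightarrow> g z < g phip"
      "g psim = \<kappa>" "g psip = \<kappa>" "deriv g psim \<noteq> 0" "deriv g psip \<noteq> 0"
      "\<And>z. z \<in> {psim<..<psip} \<Longrightarrow> g z < \<kappa>"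
      "\<And>z. z \<in> {phim..phip} \<Longrightarrow> \<bar>f z - g z\<bar> < \<delta>"
      "\<And>z. z \<in> {phim..phip} \<Longrightarrow> \<bar>deriv g z\<bar> \<le> L"
      using smooth_approximation_of_well[OF L assms(2,3,4) below levels] by blast
    show "\<exists>g psim psip. smooth g \<and> psim \<in> {phim<..<phip} \<and> psip \<in> {phim<..<phip}
       \<and> psim < 0 \<and> 0 < psip
       \<and> g phip = g phim \<and> deriv g phip \<noteq> 0 \<and> deriv g phim \<noteq> 0
       \<and> (\<forall>z\<in>{phim<..<phip}. g z - g phip < 0)
       \<and> g psip = \<kappa> \<and> g psim = \<kappa> \<and> deriv g psip \<noteq> 0 \<and> deriv g psim \<noteq> 0
       \<and> (\<forall>z\<in>{psim<..<psip}. g z - g psip < 0)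
       \<and> (\<forall>z\<in>{phim..phip}. \<bar>f z - g z\<bar> < \<delta> \<and> \<bar>deriv g z\<bar> < L + 1)"
    proof (rule exI[of _ g], rule exI[of _ psim], rule exI[of _ psip], intro conjI ballI)
      show "psim \<in> {phim<..<phip}" "psip \<in> {phim<..<phip}"
        using g(2-5) by auto
      show "\<bar>deriv g z\<bar> < L + 1" if "z \<in> {phim..phip}" for z
        using g(16)[OF that] by simp
    qed (use g in simp_all)
  qed
qed

end
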